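(* Let $A,B$ be commuting nilpotent $n\times n$ matrices over $\mathbb{F}$ with $\mathrm{sh}(B)=\underline{\lambda}=(\lambda_1,\ldots,\lambda_t)$ and $\mathrm{sh}(A)=\underline{\mu}=(\mu_1,\ldots,\mu_s)$. If $s\ge n-\frac{\lambda_t}{2}$, then $\mu_1\le 2$.
   Context: $\mathbb{F}$ is an algebraically closed field of characteristic $0$. For a nilpotent matrix $A$, $\mathrm{sh}(A)$ is the partition (nonincreasing sequence of positive integers) of $n$ given by the sizes of the Jordan blocks of its Jordan canonical form; thus $\lambda_t$ is the smallest part of $\underline{\lambda}$ and $s$ is the number of Jordan blocks of $A$. *)

theory Defs
  imports "Jordan_Normal_Form.Jordan_Normal_Form_Uniqueness"
begin

definition nilpotent_mat :: "'a :: semiring_1 mat \<Rightarrow> bool" where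
  "nilpotent_mat A \<longleftrightarrow> (\<exists>k. A ^\<^sub>m k = 0\<^sub>m (dim_row A) (dim_col A))"

end

theory Submission
  imports Defs
begin

(* Put r = n - s = n - dim ker A, the rank of A.  The proof has three ingredients.
   (1) Kernel chain: since B is nilpotent and commutes with A, the kernels of B^j A increase
       strictly until they exhaust the whole space, so dim ker (B^j A) >= min n (s + j);
       hence B^r A = 0, i.e. the image of A lies in ker B^r.
   (2) Jordan blocks: a nilpotent Jordan block J of size k >= 2r satisfies
       ker J^r \<subseteq> im J^r; this property passes to block-diagonal matrices and to similar
       matrices, so ker B^r \<subseteq> im B^r because all blocks of B have size >= 2r.
   (3) Hence A v = B^r u for some u, and A (A v) = B^r (A u) = 0, so A^2 = 0, which forces
       all Jordan blocks of A to have size <= 2.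
   The file develops general facts on kernel dimensions, matrix powers, the kernel chain,
   and Jordan forms in this order, and derives the proposition at the end. *)

section \<open>Dimensions of matrix kernels\<close>

lemma mat_kernel_zero_mat: "mat_kernel (0\<^sub>m nr nc :: 'a :: field mat) = carrier_vec nc"
  unfolding mat_kernel_def by auto

lemma kernel_dim_le:
  fixes X :: "'a :: field mat"
  assumes X: "X \<in> carrier_mat nr nc"
  shows "kernel_dim X \<le> nc"
proof -
  interpret K: kernel nr nc X by (unfold_locales, rule X)
  obtain b where fb: "finite b" and bb: "K.basis b" using kernel_basis_exists[OF X] by auto
  have bk: "b \<subseteq> mat_kernel X" using bb unfolding K.Ker.basis_def by auto
  hence bc: "b \<subseteq> carrier_vec nc" using mat_kernel[OF X] by auto
  have li: "K.NC.lin_indpt b" using bb K.lindep_same[OF bk] unfolding K.Ker.basis_def by auto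
  have "card b \<le> K.NC.dim" using K.NC.li_le_dim(2)[OF K.NC.fin_dim bc li] .
  moreover have "K.dim = card b" using K.Ker.dim_basis[OF fb bb] .
  ultimately show ?thesis using K.NC.dim_is_n by simp
qed

lemma mat_kernel_eq_of_dim:
  fixes X Y :: "'a :: field mat"
  assumes X: "X \<in> carrier_mat nr nc" and Y: "Y \<in> carrier_mat nr' nc"
    and sub: "mat_kernel X \<subseteq> mat_kernel Y" and dim: "kernel_dim Y \<le> kernel_dim X"
  shows "mat_kernel Y = mat_kernel X"
proof -
  interpret KX: kernel nr nc X by (unfold_locales, rule X)
  interpret KY: kernel nr' nc Y by (unfold_locales, rule Y)
  obtain b where fb: "finite b" and bb: "KX.basis b" using kernel_basis_exists[OF X] by auto
  have bk: "b \<subseteq> mat_kernel X" using bb unfolding KX.Ker.basis_def by auto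
  have li: "KX.NC.lin_indpt b" using bb KX.lindep_same[OF bk] unfolding KX.Ker.basis_def by auto
  have bkY: "b \<subseteq> mat_kernel Y" using bk sub by auto
  have liY: "KY.lin_indpt b" using li KY.lindep_same[OF bkY] by auto
  obtain c where fc: "finite c" and cb: "KY.basis c" using kernel_basis_exists[OF Y] by auto
  have fdY: "KY.Ker.fin_dim"
    unfolding KY.Ker.fin_dim_def using fc cb unfolding KY.Ker.basis_def by auto
  have "KY.basis b"
    by (rule KY.Ker.dim_li_is_basis[OF fdY fb bkY liY], insert dim KX.Ker.dim_basis[OF fb bb], simp)
  hence "KY.span b = mat_kernel Y" unfolding KY.Ker.basis_def by auto
  moreover have "KY.span b = KX.span b" using KY.span_same[OF bkY] KX.span_same[OF bk] by simp
  moreover have "KX.span b = mat_kernel X" using bb unfolding KX.Ker.basis_def by auto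
  ultimately show ?thesis by simp
qed

lemma kernel_dim_of_full_kernel:
  fixes X :: "'a :: field mat"
  assumes X: "X \<in> carrier_mat nr nc" and full: "mat_kernel X = carrier_vec nc"
  shows "kernel_dim X = nc"
proof -
  interpret K: kernel nr nc X by (unfold_locales, rule X)
  have "K.VK = K.NC.V" using full by (simp add: module_vec_def)
  hence "K.dim = K.NC.dim" by simp
  thus ?thesis using K.NC.dim_is_n by simp
qed

lemma full_kernel_iff_kernel_dim:
  fixes X :: "'a :: field mat"
  assumes X: "X \<in> carrier_mat nr nc"
  shows "mat_kernel X = carrier_vec nc \<longleftrightarrow> kernel_dim X = nc"
proof
  assume "kernel_dim X = nc"
  moreover have "kernel_dim (0\<^sub>m nr nc :: 'a mat) = nc"
    by (rule kernel_dim_of_full_kernel[OF zero_carrier_mat mat_kernel_zero_mat])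
  moreover have "mat_kernel X \<subseteq> mat_kernel (0\<^sub>m nr nc :: 'a mat)"
    unfolding mat_kernel_zero_mat by (rule mat_kernel_carrier[OF X])
  ultimately show "mat_kernel X = carrier_vec nc"
    using mat_kernel_eq_of_dim[OF X, of "0\<^sub>m nr nc" nr] by (simp add: mat_kernel_zero_mat)
qed (rule kernel_dim_of_full_kernel[OF X])

section \<open>Powers of commuting matrices\<close>

lemma pow_mat_add:
  assumes B: "(B :: 'a :: semiring_1 mat) \<in> carrier_mat n n"
  shows "B ^\<^sub>m (a + b) = B ^\<^sub>m a * B ^\<^sub>m b"
proof (induct b)
  case 0 then show ?case using B by simp
next
  case (Suc b)
  have "B ^\<^sub>m (a + Suc b) = (B ^\<^sub>m a * B ^\<^sub>m b) * B" using Suc by simp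
  also have "\<dots> = B ^\<^sub>m a * (B ^\<^sub>m b * B)" using B by (simp add: assoc_mult_mat[of _ n n _ n _ n])
  finally show ?case by simp
qed

lemma pow_mat_commute:
  assumes A: "(A :: 'a :: semiring_1 mat) \<in> carrier_mat n n" and B: "B \<in> carrier_mat n n"
    and AB: "A * B = B * A"
  shows "A * B ^\<^sub>m k = B ^\<^sub>m k * A"
proof (induct k)
  case 0 then show ?case using A B by simp
next
  case (Suc k)
  have "A * B ^\<^sub>m Suc k = (A * B ^\<^sub>m k) * B" using A B by (simp add: assoc_mult_mat[of _ n n _ n _ n])
  also have "\<dots> = B ^\<^sub>m k * (A * B)" unfolding Suc using A B by (simp add: assoc_mult_mat[of _ n n _ n _ n])
  also have "\<dots> = B ^\<^sub>m Suc k * A" unfolding AB using A B by (simp add: assoc_mult_mat[of _ n n _ n _ n])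
  finally show ?case .
qed

lemma pow_mat_mult_shift:
  assumes A: "(A :: 'a :: semiring_1 mat) \<in> carrier_mat n n" and B: "B \<in> carrier_mat n n"
    and AB: "A * B = B * A"
  shows "B ^\<^sub>m k * A * B = B ^\<^sub>m (Suc k) * A" and "B * (B ^\<^sub>m k * A) = B ^\<^sub>m (Suc k) * A"
proof -
  have "B ^\<^sub>m k * A * B = B ^\<^sub>m k * (A * B)" using A B by (simp add: assoc_mult_mat[of _ n n _ n _ n])
  also have "\<dots> = (B ^\<^sub>m k * B) * A" unfolding AB using A B by (simp add: assoc_mult_mat[of _ n n _ n _ n])
  finally show "B ^\<^sub>m k * A * B = B ^\<^sub>m (Suc k) * A" by simp
  have "B * (B ^\<^sub>m k * A) = (B * B ^\<^sub>m k) * A" using A B by (simp add: assoc_mult_mat[of _ n n _ n _ n])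
  also have "B * B ^\<^sub>m k = B ^\<^sub>m k * B" by (rule pow_mat_commute[OF B B refl])
  finally show "B * (B ^\<^sub>m k * A) = B ^\<^sub>m (Suc k) * A" by simp
qed

section \<open>The kernel chain of B^j A\<close>

text \<open>Once the chain of kernels stops growing, it stays constant: if B^(j+1) A v = 0
  forces B^j A v = 0, then so does B^(j+i) A v = 0, by induction on i
  applied to B v.\<close>
lemma kernel_chain_stable:
  fixes A B :: "'a :: field mat"
  assumes A: "A \<in> carrier_mat n n" and B: "B \<in> carrier_mat n n" and AB: "A * B = B * A"
    and stop: "mat_kernel (B ^\<^sub>m Suc j * A) \<subseteq> mat_kernel (B ^\<^sub>m j * A)"
  shows "mat_kernel (B ^\<^sub>m (j + i) * A) \<subseteq> mat_kernel (B ^\<^sub>m j * A)"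
proof (induct i)
  case 0 then show ?case by simp
next
  case (Suc i)
  have C: "\<And>k. B ^\<^sub>m k * A \<in> carrier_mat n n" using A B by auto
  show ?case
  proof
    fix v assume v: "v \<in> mat_kernel (B ^\<^sub>m (j + Suc i) * A)"
    note vc = mat_kernelD(1)[OF C v] and v0 = mat_kernelD(2)[OF C v]
    have shift: "\<And>k. (B ^\<^sub>m k * A) *\<^sub>v (B *\<^sub>v v) = (B ^\<^sub>m Suc k * A) *\<^sub>v v"
      using assoc_mult_mat_vec[OF C B vc] pow_mat_mult_shift(1)[OF A B AB] by simp
    have "(B ^\<^sub>m (j + i) * A) *\<^sub>v (B *\<^sub>v v) = 0\<^sub>v n"
      unfolding shift using v0 by (simp only: add_Suc_right)
    hence "B *\<^sub>v v \<in> mat_kernel (B ^\<^sub>m (j + i) * A)"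
      by (rule mat_kernelI[OF C mult_mat_vec_carrier[OF B vc]])
    with Suc have "B *\<^sub>v v \<in> mat_kernel (B ^\<^sub>m j * A)" by auto
    hence "(B ^\<^sub>m Suc j * A) *\<^sub>v v = 0\<^sub>v n" unfolding shift[symmetric] by (rule mat_kernelD(2)[OF C])
    hence "v \<in> mat_kernel (B ^\<^sub>m Suc j * A)" by (rule mat_kernelI[OF C vc])
    thus "v \<in> mat_kernel (B ^\<^sub>m j * A)" using stop by auto
  qed
qed

text \<open>For nilpotent B the chain grows strictly until it is everything, so its
  j-th member has dimension at least min n (dim ker A + j).\<close>
lemma kernel_chain_dim:
  fixes A B :: "'a :: field mat"
  assumes A: "A \<in> carrier_mat n n" and B: "B \<in> carrier_mat n n"
    and AB: "A * B = B * A" and nil: "B ^\<^sub>m N = 0\<^sub>m n n"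
  shows "kernel_dim (B ^\<^sub>m j * A) \<ge> min n (kernel_dim A + j)"
proof (induct j)
  case 0 then show ?case using A B by simp
next
  case (Suc j)
  have C: "\<And>k. B ^\<^sub>m k * A \<in> carrier_mat n n" using A B by auto
  have mono: "mat_kernel (B ^\<^sub>m j * A) \<subseteq> mat_kernel (B ^\<^sub>m Suc j * A)"
    unfolding pow_mat_mult_shift(2)[OF A B AB, symmetric] by (rule mat_kernel_mult_subset[OF C B])
  show ?case
  proof (cases "kernel_dim (B ^\<^sub>m j * A) = n")
    case True
    hence "mat_kernel (B ^\<^sub>m j * A) = carrier_vec n"
      by (rule iffD2[OF full_kernel_iff_kernel_dim[OF C]])
    hence "mat_kernel (B ^\<^sub>m Suc j * A) = carrier_vec n"
      using mono mat_kernel_carrier[OF C[of "Suc j"]] by blast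
    hence "kernel_dim (B ^\<^sub>m Suc j * A) = n" by (rule iffD1[OF full_kernel_iff_kernel_dim[OF C]])
    thus ?thesis by linarith
  next
    case False
    have "kernel_dim (B ^\<^sub>m j * A) < kernel_dim (B ^\<^sub>m Suc j * A)"
    proof (rule ccontr)
      assume "\<not> ?thesis"
      hence "kernel_dim (B ^\<^sub>m Suc j * A) \<le> kernel_dim (B ^\<^sub>m j * A)" by linarith
      from mat_kernel_eq_of_dim[OF C C mono this]
      have "mat_kernel (B ^\<^sub>m Suc j * A) \<subseteq> mat_kernel (B ^\<^sub>m j * A)" by (rule equalityD1)
      hence "mat_kernel (B ^\<^sub>m (j + N) * A) \<subseteq> mat_kernel (B ^\<^sub>m j * A)"
        by (rule kernel_chain_stable[OF A B AB])
      moreover have "B ^\<^sub>m (j + N) * A = 0\<^sub>m n n"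
        unfolding pow_mat_add[OF B] nil using A B by simp
      hence "mat_kernel (B ^\<^sub>m (j + N) * A) = carrier_vec n" by (simp only: mat_kernel_zero_mat)
      ultimately have "mat_kernel (B ^\<^sub>m j * A) = carrier_vec n"
        using mat_kernel_carrier[OF C] by blast
      thus False using False full_kernel_iff_kernel_dim[OF C] by blast
    qed
    thus ?thesis using Suc False kernel_dim_le[OF C] by linarith
  qed
qed

lemma pow_rank_mult_annihilates:
  fixes A B :: "'a :: field mat"
  assumes A: "A \<in> carrier_mat n n" and B: "B \<in> carrier_mat n n"
    and AB: "A * B = B * A" and nil: "B ^\<^sub>m N = 0\<^sub>m n n"
  shows "mat_kernel (B ^\<^sub>m (n - kernel_dim A) * A) = carrier_vec n"
proof -
  have C: "B ^\<^sub>m (n - kernel_dim A) * A \<in> carrier_mat n n" using A B by auto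
  have "kernel_dim (B ^\<^sub>m (n - kernel_dim A) * A) = n"
    using kernel_chain_dim[OF A B AB nil, of "n - kernel_dim A"] kernel_dim_le[OF A] kernel_dim_le[OF C]
    by linarith
  thus ?thesis using full_kernel_iff_kernel_dim[OF C] by simp
qed

section \<open>Kernels contained in images\<close>

definition kernel_in_image :: "'a :: field mat \<Rightarrow> bool" where
  "kernel_in_image M \<longleftrightarrow> (\<forall>v \<in> mat_kernel M. \<exists>u \<in> carrier_vec (dim_col M). M *\<^sub>v u = v)"

lemma jordan_block_zero_pow_mult_vec:
  assumes u: "u \<in> carrier_vec k" and i: "i < k"
  shows "((jordan_block k (0 :: 'a :: field) ^\<^sub>m r) *\<^sub>v u) $ i = (if i + r < k then u $ (i + r) else 0)"
proof -
  have "((jordan_block k (0 :: 'a) ^\<^sub>m r) *\<^sub>v u) $ i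
     = (\<Sum>j = 0..<k. (if i \<le> j \<and> j - i = r then 1 else 0) * u $ j)"
    unfolding jordan_block_zero_pow using u i by (auto simp: mult_mat_vec_def scalar_prod_def)
  also have "\<dots> = (\<Sum>j\<in>{0..<k}. (if j = i + r then u $ j else 0))"
    by (rule sum.cong, auto)
  also have "\<dots> = (if i + r < k then u $ (i + r) else 0)"
    by (subst sum.delta, auto)
  finally show ?thesis .
qed

text \<open>If 2r \<le> k and J^r v = 0 for the nilpotent Jordan block J of size k, then v is
  supported on its first r \<le> k - r coordinates, so v = J^r u for u = v shifted down by r.\<close>
lemma kernel_in_image_jordan_block_pow:
  assumes "2 * r \<le> k"
  shows "kernel_in_image (jordan_block k (0 :: 'a :: field) ^\<^sub>m r)"
  unfolding kernel_in_image_def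
proof
  let ?J = "jordan_block k (0 :: 'a) ^\<^sub>m r"
  have J: "?J \<in> carrier_mat k k" by simp
  fix v assume "v \<in> mat_kernel ?J"
  note vc = mat_kernelD(1)[OF J this] and v0 = mat_kernelD(2)[OF J this]
  have vanish: "v $ (i + r) = 0" if "i + r < k" for i
    using arg_cong[OF v0, of "\<lambda>w. w $ i"] jordan_block_zero_pow_mult_vec[OF vc, of i r] that by simp
  define u where "u = vec k (\<lambda>j. if r \<le> j then v $ (j - r) else 0)"
  have uc: "u \<in> carrier_vec k" unfolding u_def by simp
  have "?J *\<^sub>v u = v"
  proof (rule eq_vecI)
    fix i assume "i < dim_vec v"
    hence i: "i < k" using vc by simp
    show "(?J *\<^sub>v u) $ i = v $ i"
    proof (cases "i + r < k")
      case True
      hence "(?J *\<^sub>v u) $ i = u $ (i + r)" unfolding jordan_block_zero_pow_mult_vec[OF uc i] by simp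
      also have "\<dots> = v $ i" unfolding u_def using True by simp
      finally show ?thesis .
    next
      case False
      hence "v $ ((i - r) + r) = 0" using vanish[of "i - r"] assms i by simp
      moreover have "(i - r) + r = i" using False assms i by simp
      ultimately show ?thesis unfolding jordan_block_zero_pow_mult_vec[OF uc i] using False by simp
    qed
  qed (use vc in simp)
  thus "\<exists>u \<in> carrier_vec (dim_col ?J). ?J *\<^sub>v u = v" using uc by auto
qed

lemma kernel_in_image_four_block:
  fixes M1 M2 :: "'a :: field mat"
  assumes M1: "M1 \<in> carrier_mat a a" and M2: "M2 \<in> carrier_mat b b"
    and ki1: "kernel_in_image M1" and ki2: "kernel_in_image M2"
  shows "kernel_in_image (four_block_mat M1 (0\<^sub>m a b) (0\<^sub>m b a) M2)"
  unfolding kernel_in_image_def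
proof
  let ?M = "four_block_mat M1 (0\<^sub>m a b) (0\<^sub>m b a) M2"
  have M: "?M \<in> carrier_mat (a + b) (a + b)" using M1 M2 by auto
  fix v assume "v \<in> mat_kernel ?M"
  note vc = mat_kernelD(1)[OF M this] and v0 = mat_kernelD(2)[OF M this]
  define v1 where "v1 = vec_first v a"
  define v2 where "v2 = vec_last v b"
  have v: "v = v1 @\<^sub>v v2" unfolding v1_def v2_def using vc by simp
  have v1c: "v1 \<in> carrier_vec a" and v2c: "v2 \<in> carrier_vec b" unfolding v1_def v2_def by auto
  have "M1 *\<^sub>v v1 @\<^sub>v M2 *\<^sub>v v2 = 0\<^sub>v a @\<^sub>v 0\<^sub>v b"
  proof -
    have "0\<^sub>v (a + b) = 0\<^sub>v a @\<^sub>v (0\<^sub>v b :: 'a vec)" by (intro eq_vecI, auto)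
    thus ?thesis using v0 mult_mat_vec_split[OF M1 M2 v1c v2c] unfolding v[symmetric] by simp
  qed
  hence "M1 *\<^sub>v v1 = 0\<^sub>v a" and "M2 *\<^sub>v v2 = 0\<^sub>v b"
    using append_vec_eq[of "M1 *\<^sub>v v1" a "0\<^sub>v a"] M1 v1c by auto
  hence "v1 \<in> mat_kernel M1" and "v2 \<in> mat_kernel M2"
    using mat_kernelI[OF M1 v1c] mat_kernelI[OF M2 v2c] by auto
  then obtain u1 u2 where u1: "u1 \<in> carrier_vec a" "M1 *\<^sub>v u1 = v1"
    and u2: "u2 \<in> carrier_vec b" "M2 *\<^sub>v u2 = v2"
    using ki1 ki2 M1 M2 unfolding kernel_in_image_def by fastforce
  have "?M *\<^sub>v (u1 @\<^sub>v u2) = v"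
    unfolding mult_mat_vec_split[OF M1 M2 u1(1) u2(1)] u1 u2 v ..
  moreover have "u1 @\<^sub>v u2 \<in> carrier_vec (dim_col ?M)" using u1 u2 M by auto
  ultimately show "\<exists>u \<in> carrier_vec (dim_col ?M). ?M *\<^sub>v u = v" by blast
qed

lemma kernel_in_image_diag_block:
  assumes "\<And>M. M \<in> set Ms \<Longrightarrow> square_mat M \<and> kernel_in_image (M :: 'a :: field mat)"
  shows "kernel_in_image (diag_block_mat Ms)"
  using assms
proof (induct Ms)
  case Nil
  have "v = diag_block_mat [] *\<^sub>v v" if "v \<in> carrier_vec 0" for v :: "'a vec"
    using that by (intro eq_vecI, auto)
  thus ?case unfolding kernel_in_image_def mat_kernel_def by auto
next
  case (Cons M Ms)
  let ?D = "diag_block_mat Ms"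
  have sq: "square_mat M" and kiM: "kernel_in_image M" using Cons(2) by auto
  have kiD: "kernel_in_image ?D" using Cons by auto
  have sqD: "square_mat ?D" by (rule diag_block_mat_square, insert Cons(2), auto)
  have "M \<in> carrier_mat (dim_row M) (dim_row M)" and "?D \<in> carrier_mat (dim_row ?D) (dim_row ?D)"
    using sq sqD by auto
  from kernel_in_image_four_block[OF this kiM kiD] sq sqD show ?case by (simp add: Let_def)
qed

lemma kernel_in_image_similar:
  fixes X J :: "'a :: field mat"
  assumes X: "X \<in> carrier_mat n n" and wit: "similar_mat_wit X J P Q" and kiJ: "kernel_in_image J"
  shows "kernel_in_image X"
  unfolding kernel_in_image_def
proof
  from similar_mat_witD2[OF X wit] have PQ: "P * Q = 1\<^sub>m n" and QP: "Q * P = 1\<^sub>m n"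
    and XPJQ: "X = P * J * Q" and J: "J \<in> carrier_mat n n"
    and P: "P \<in> carrier_mat n n" and Q: "Q \<in> carrier_mat n n" by auto
  have PJ: "P * J \<in> carrier_mat n n" using P J by simp
  have QX: "Q * X = J * Q"
    unfolding XPJQ assoc_mult_mat[OF Q PJ Q, symmetric] assoc_mult_mat[OF Q P J, symmetric] QP
    using J by simp
  have XP: "X * P = P * J"
    unfolding XPJQ assoc_mult_mat[OF PJ Q P] QP by (rule right_mult_one_mat[OF PJ])
  fix v assume "v \<in> mat_kernel X"
  note vc = mat_kernelD(1)[OF X this] and v0 = mat_kernelD(2)[OF X this]
  have "J *\<^sub>v (Q *\<^sub>v v) = Q *\<^sub>v (X *\<^sub>v v)"
    using QX assoc_mult_mat_vec[OF J Q vc] assoc_mult_mat_vec[OF Q X vc] by simp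
  hence "Q *\<^sub>v v \<in> mat_kernel J" using v0 Q J vc by (intro mat_kernelI[OF J], auto)
  then obtain u where u: "u \<in> carrier_vec n" and Ju: "J *\<^sub>v u = Q *\<^sub>v v"
    using kiJ J unfolding kernel_in_image_def by auto
  have "X *\<^sub>v (P *\<^sub>v u) = P *\<^sub>v (Q *\<^sub>v v)"
    using XP Ju assoc_mult_mat_vec[OF X P u] assoc_mult_mat_vec[OF P J u] by simp
  also have "\<dots> = v" using assoc_mult_mat_vec[OF P Q vc] PQ vc by simp
  finally show "\<exists>u \<in> carrier_vec (dim_col X). X *\<^sub>v u = v" using P u X by auto
qed

lemma kernel_in_image_pow_of_jordan_nf:
  fixes B :: "'a :: field mat"
  assumes B: "B \<in> carrier_mat n n" and jnf: "jordan_nf B xs"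
    and blocks: "\<forall>(s, e) \<in> set xs. e = 0 \<and> 2 * r \<le> s"
  shows "kernel_in_image (B ^\<^sub>m r)"
proof -
  from jnf obtain P Q where "similar_mat_wit B (jordan_matrix xs) P Q"
    unfolding jordan_nf_def similar_mat_def by auto
  hence wit: "similar_mat_wit (B ^\<^sub>m r) (jordan_matrix xs ^\<^sub>m r) P Q" by (rule similar_mat_wit_pow)
  have "kernel_in_image (jordan_matrix xs ^\<^sub>m r)"
    unfolding jordan_matrix_pow
  proof (rule kernel_in_image_diag_block)
    fix M assume "M \<in> set (map (\<lambda>(n, a). jordan_block n a ^\<^sub>m r) xs)"
    then obtain s e where "(s, e) \<in> set xs" and M: "M = jordan_block s e ^\<^sub>m r" by auto
    with blocks have e: "e = 0" and size: "2 * r \<le> s" by auto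
    have "kernel_in_image M" unfolding M e by (rule kernel_in_image_jordan_block_pow[OF size])
    moreover have "square_mat M" unfolding M by simp
    ultimately show "square_mat M \<and> kernel_in_image M" by simp
  qed
  thus ?thesis by (rule kernel_in_image_similar[OF pow_carrier_mat[OF B] wit])
qed

section \<open>Reading block sizes off kernel dimensions\<close>

lemma jordan_nf_size_sum:
  assumes X: "X \<in> carrier_mat n n" and jnf: "jordan_nf X xs"
  shows "sum_list (map fst xs) = n"
proof -
  from jnf obtain P Q where "similar_mat_wit X (jordan_matrix xs) P Q"
    unfolding jordan_nf_def similar_mat_def by auto
  from similar_mat_witD2(5)[OF X this] have "jordan_matrix xs \<in> carrier_mat n n" .
  thus ?thesis using jordan_matrix_carrier[of xs] by auto
qed

lemma jordan_nf_kernel_dim_pow: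
  assumes X: "(X :: 'a :: field mat) \<in> carrier_mat n n" and jnf: "jordan_nf X xs"
  shows "kernel_dim (X ^\<^sub>m k) = (\<Sum>s \<leftarrow> map fst [(s, e) \<leftarrow> xs. e = 0]. min k s)"
proof -
  have "char_matrix X 0 = X" unfolding char_matrix_def using X by auto
  thus ?thesis using dim_gen_eigenspace[OF jnf, of 0 k] unfolding dim_gen_eigenspace_def by simp
qed

lemma sum_min_filter_le:
  "(\<Sum>s \<leftarrow> map fst [(s, e) \<leftarrow> xs. e = (0 :: 'a :: zero)]. min (k :: nat) s) \<le> sum_list (map fst xs)"
  by (induct xs, auto simp: min_def)

lemma sum_min_filter_eq:
  assumes "\<forall>x \<in> set xs. fst x > (0 :: nat)"
    and "(\<Sum>s \<leftarrow> map fst [(s, e) \<leftarrow> xs. e = (0 :: 'a :: zero)]. min k s) = sum_list (map fst xs)"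
  shows "\<forall>(s, e) \<in> set xs. e = 0 \<and> s \<le> k"
  using assms
proof (induct xs)
  case Nil then show ?case by simp
next
  case (Cons x xs)
  obtain s e where x: "x = (s, e)" by force
  have pos: "\<forall>x \<in> set xs. fst x > 0" and s: "s > 0" using Cons(2) x by auto
  note le = sum_min_filter_le[where xs = xs and k = k]
  have "e = 0" using Cons(3) x s le by (auto split: if_splits)
  hence "s \<le> k" and rest: "(\<Sum>s \<leftarrow> map fst [(s, e) \<leftarrow> xs. e = 0]. min k s) = sum_list (map fst xs)"
    using Cons(3) x le by (auto simp: min_def split: if_splits)
  thus ?case using Cons(1)[OF pos rest] \<open>e = 0\<close> x by simp
qed

lemma jordan_nf_blocks_of_full_kernel:
  assumes X: "(X :: 'a :: field mat) \<in> carrier_mat n n" and jnf: "jordan_nf X xs"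
    and full: "mat_kernel (X ^\<^sub>m k) = carrier_vec n"
  shows "\<forall>(s, e) \<in> set xs. e = 0 \<and> s \<le> k"
proof (rule sum_min_filter_eq)
  show "\<forall>x \<in> set xs. fst x > 0" using jnf unfolding jordan_nf_def by force
  have "kernel_dim (X ^\<^sub>m k) = n" using full full_kernel_iff_kernel_dim[OF pow_carrier_mat[OF X]] by simp
  thus "(\<Sum>s \<leftarrow> map fst [(s, e) \<leftarrow> xs. e = 0]. min k s) = sum_list (map fst xs)"
    using jordan_nf_kernel_dim_pow[OF X jnf] jordan_nf_size_sum[OF X jnf] by simp
qed

lemma jordan_nf_nilpotent_blocks:
  assumes X: "(X :: 'a :: field mat) \<in> carrier_mat n n" and jnf: "jordan_nf X xs"
    and nil: "nilpotent_mat X"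
  shows "\<forall>(s, e) \<in> set xs. e = 0"
proof -
  from nil X obtain N where "X ^\<^sub>m N = 0\<^sub>m n n" unfolding nilpotent_mat_def by auto
  hence "mat_kernel (X ^\<^sub>m N) = carrier_vec n" by (simp only: mat_kernel_zero_mat)
  from jordan_nf_blocks_of_full_kernel[OF X jnf this] show ?thesis by auto
qed

lemma jordan_nf_nilpotent_kernel_dim:
  assumes X: "(X :: 'a :: field mat) \<in> carrier_mat n n" and jnf: "jordan_nf X xs"
    and nil: "nilpotent_mat X"
  shows "kernel_dim X = length xs"
proof -
  have pos: "\<forall>x \<in> set xs. fst x > 0" using jnf unfolding jordan_nf_def by force
  have "[(s, e) \<leftarrow> xs. e = 0] = xs" using jordan_nf_nilpotent_blocks[OF X jnf nil] by (intro filter_True) auto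
  moreover have "(\<Sum>s \<leftarrow> map fst xs. min 1 s) = length xs" using pos by (induct xs) auto
  ultimately show ?thesis using jordan_nf_kernel_dim_pow[OF X jnf, of 1] X by simp
qed

text \<open>Ingredient (3): if B^r A = 0 and ker B^r \<subseteq> im B^r for a matrix B commuting with A,
  then A^2 = 0, since A v = B^r u gives A (A v) = B^r (A u) = 0.\<close>
lemma square_annihilates_of_commuting:
  fixes A B :: "'a :: field mat"
  assumes A: "A \<in> carrier_mat n n" and B: "B \<in> carrier_mat n n" and AB: "A * B = B * A"
    and ann: "mat_kernel (B ^\<^sub>m r * A) = carrier_vec n" and kii: "kernel_in_image (B ^\<^sub>m r)"
  shows "mat_kernel (A ^\<^sub>m 2) = carrier_vec n"
proof -
  have Br: "B ^\<^sub>m r \<in> carrier_mat n n" using B by simp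
  have BrA: "B ^\<^sub>m r * A \<in> carrier_mat n n" by (rule mult_carrier_mat[OF Br A])
  have Av: "B ^\<^sub>m r *\<^sub>v (A *\<^sub>v v) = 0\<^sub>v n" if v: "v \<in> carrier_vec n" for v
    using mat_kernelD(2)[OF BrA, of v] ann v assoc_mult_mat_vec[OF Br A v] by simp
  have "(A ^\<^sub>m 2) *\<^sub>v v = 0\<^sub>v n" if v: "v \<in> carrier_vec n" for v
  proof -
    have "A *\<^sub>v v \<in> mat_kernel (B ^\<^sub>m r)" using Av[OF v] A v by (intro mat_kernelI[OF Br], auto)
    then obtain u where u: "u \<in> carrier_vec n" and Bu: "B ^\<^sub>m r *\<^sub>v u = A *\<^sub>v v"
      using kii Br unfolding kernel_in_image_def by fastforce
    have "(A ^\<^sub>m 2) *\<^sub>v v = A *\<^sub>v (A *\<^sub>v v)"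
      using A v assoc_mult_mat_vec[OF A A v] by (simp add: numeral_2_eq_2)
    also have "\<dots> = (A * B ^\<^sub>m r) *\<^sub>v u" unfolding Bu[symmetric] using assoc_mult_mat_vec[OF A Br u] by simp
    also have "\<dots> = B ^\<^sub>m r *\<^sub>v (A *\<^sub>v u)"
      unfolding pow_mat_commute[OF A B AB] using assoc_mult_mat_vec[OF Br A u] by simp
    also have "\<dots> = 0\<^sub>v n" by (rule Av[OF u])
    finally show ?thesis .
  qed
  thus ?thesis unfolding mat_kernel[OF pow_carrier_mat[OF A]] by auto
qed

theorem proposition2p6:
  fixes A B :: "'a :: {alg_closed_field, field_char_0} mat"
    and n :: nat
    and lam mu :: "(nat \<times> 'a) list"
  assumes "A \<in> carrier_mat n n" and "B \<in> carrier_mat n n"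
    and "A * B = B * A"
    and "nilpotent_mat A" and "nilpotent_mat B"
    and "jordan_nf B lam" and "jordan_nf A mu"
    and "real (length mu) \<ge> real n - real (Min (fst ` set lam)) / 2"
  shows "\<forall>k \<in> fst ` set mu. k \<le> 2"
proof -
  note A = assms(1) and B = assms(2) and AB = assms(3) and jB = assms(6) and jA = assms(7)
  define r where "r = n - kernel_dim A"
  have rank: "kernel_dim A = length mu" by (rule jordan_nf_nilpotent_kernel_dim[OF A jA assms(4)])
  have large: "2 * r \<le> s" if "(s, e) \<in> set lam" for s e
  proof -
    have "Min (fst ` set lam) \<le> s" using that by (intro Min_le) force+
    thus ?thesis using assms(8) kernel_dim_le[OF A] unfolding r_def rank by (simp add: of_nat_diff)
  qed
  have blocksB: "\<forall>(s, e) \<in> set lam. e = 0 \<and> 2 * r \<le> s"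
    using jordan_nf_nilpotent_blocks[OF B jB assms(5)] large by auto
  from assms(5) B obtain N where "B ^\<^sub>m N = 0\<^sub>m n n" unfolding nilpotent_mat_def by auto
  from square_annihilates_of_commuting[OF A B AB pow_rank_mult_annihilates[OF A B AB this, folded r_def]
      kernel_in_image_pow_of_jordan_nf[OF B jB blocksB]]
  have "mat_kernel (A ^\<^sub>m 2) = carrier_vec n" .
  thus ?thesis using jordan_nf_blocks_of_full_kernel[OF A jA] by fastforce
qed

end
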